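(* A set system $H=(U,(A_1,\dots,A_m))$ is harmonic if and only if $|H_{I_1,I_2}|=|H_{J_1,J_2}|$ for all pairs $(I_1,I_2)\sim(J_1,J_2)$.
   Context: For $I_1,I_2\subseteq[m]$, $H_{I_1,I_2}=\bigcap_{i\in I_1}A_i\cap\bigcap_{i\in I_2}(U\setminus A_i)$ (an empty intersection is $U$), and $H_I=H_{I,\emptyset}$. The run decomposition of a finite set $I$ of positive integers is the partition formed by the sizes, in nonincreasing order, of the maximal runs of consecutive integers in $I$. $H$ is harmonic if $|H_I|=|H_J|$ whenever $I,J\subseteq[m]$ have the same run decomposition. Pairs $(I_1,I_2)$, $(J_1,J_2)$ of subsets of $[m]$ with $I_1\cap I_2=J_1\cap J_2=\emptyset$ are equivalent, written $(I_1,I_2)\sim(J_1,J_2)$, if there is a bijection $\sigma:[m]\to[m]$ with $\sigma(I_1)=J_1$, $\sigma(I_2)=J_2$, and for all $i,j\in I_1\cup I_2$, $|\sigma(i)-\sigma(j)|=1$ iff $|i-j|=1$. *)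

theory Defs
  imports Main "HOL-Library.Multiset"
begin

text \<open>A set system H = (U, (A_1,...,A_m)) is given by a ground set U, a family
  A :: nat => 'a set (only A 1, ..., A m are relevant) and m.\<close>

definition H2 :: "'a set \<Rightarrow> (nat \<Rightarrow> 'a set) \<Rightarrow> nat set \<Rightarrow> nat set \<Rightarrow> 'a set" where
  "H2 U A I1 I2 = {x \<in> U. (\<forall>i\<in>I1. x \<in> A i) \<and> (\<forall>i\<in>I2. x \<in> U - A i)}"

definition H1 :: "'a set \<Rightarrow> (nat \<Rightarrow> 'a set) \<Rightarrow> nat set \<Rightarrow> 'a set" where
  "H1 U A I = H2 U A I {}"

definition runs :: "nat set \<Rightarrow> nat set set" where
  "runs I = {R. \<exists>a b. a \<le> b \<and> R = {a..b} \<and> R \<subseteq> I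
                 \<and> (\<forall>x. Suc x = a \<longrightarrow> x \<notin> I) \<and> Suc b \<notin> I}"

definition run_decomp :: "nat set \<Rightarrow> nat list" where
  "run_decomp I = rev (sorted_list_of_multiset (image_mset card (mset_set (runs I))))"

definition harmonic :: "'a set \<Rightarrow> (nat \<Rightarrow> 'a set) \<Rightarrow> nat \<Rightarrow> bool" where
  "harmonic U A m \<longleftrightarrow> (\<forall>I J. I \<subseteq> {1..m} \<longrightarrow> J \<subseteq> {1..m} \<longrightarrow>
      run_decomp I = run_decomp J \<longrightarrow> card (H1 U A I) = card (H1 U A J))"

definition pair_equiv :: "nat \<Rightarrow> nat set \<Rightarrow> nat set \<Rightarrow> nat set \<Rightarrow> nat set \<Rightarrow> bool" where
  "pair_equiv m I1 I2 J1 J2 \<longleftrightarrow> (\<exists>\<sigma>. bij_betw \<sigma> {1..m} {1..m} \<and> \<sigma> ` I1 = J1 \<and> \<sigma> ` I2 = J2 \<and>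
      (\<forall>i\<in>I1 \<union> I2. \<forall>j\<in>I1 \<union> I2.
          \<bar>int (\<sigma> i) - int (\<sigma> j)\<bar> = 1 \<longleftrightarrow> \<bar>int i - int j\<bar> = 1))"

end

theory Submission
  imports Defs "HOL-Library.Disjoint_Sets"
begin

text \<open>
  Since H(I1, I2 + i) = H(I1, I2) - H(I1 + i, I2), induction on I2 expresses the number
  |H(I1, I2)| through the numbers |H(K)| with I1 \<subseteq> K \<subseteq> I1 \<union> I2. The runs of a finite set
  of naturals are exactly the connected components of the graph joining i and i + 1, so a
  map that is injective and preserves adjacency on I1 \<union> I2 carries the runs of each such K
  onto the runs of its image, preserving their sizes; harmonicity then makes the two counts
  equal. Conversely, if I and J have the same run decomposition, pairing runs of equal
  length and translating each run of I onto its partner gives an adjacency-preserving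
  bijection from I onto J, and any bijection between the complements in [m] extends it to
  a permutation witnessing (I, {}) \<sim> (J, {}).
\<close>

definition adj_closed :: "nat set \<Rightarrow> nat set \<Rightarrow> bool" where
  "adj_closed S C \<longleftrightarrow> (\<forall>i\<in>C. \<forall>j\<in>S. \<bar>int i - int j\<bar> = 1 \<longrightarrow> j \<in> C)"

definition adj_connected :: "nat set \<Rightarrow> bool" where
  "adj_connected C \<longleftrightarrow> (\<forall>D. D \<noteq> {} \<longrightarrow> D \<subseteq> C \<longrightarrow> adj_closed C D \<longrightarrow> D = C)"

definition adj_component :: "nat set \<Rightarrow> nat set \<Rightarrow> bool" where
  "adj_component S C \<longleftrightarrow> C \<noteq> {} \<and> C \<subseteq> S \<and> adj_closed S C \<and> adj_connected C"

definition adj_preserving :: "(nat \<Rightarrow> nat) \<Rightarrow> nat set \<Rightarrow> bool" where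
  "adj_preserving \<sigma> S \<longleftrightarrow>
     (\<forall>i\<in>S. \<forall>j\<in>S. \<bar>int (\<sigma> i) - int (\<sigma> j)\<bar> = 1 \<longleftrightarrow> \<bar>int i - int j\<bar> = 1)"

lemma adj_preserving_subset: "adj_preserving \<sigma> S \<Longrightarrow> T \<subseteq> S \<Longrightarrow> adj_preserving \<sigma> T"
  unfolding adj_preserving_def by blast

lemma pair_equiv_altdef:
  "pair_equiv m I1 I2 J1 J2 \<longleftrightarrow>
     (\<exists>\<sigma>. bij_betw \<sigma> {1..m} {1..m} \<and> \<sigma> ` I1 = J1 \<and> \<sigma> ` I2 = J2 \<and> adj_preserving \<sigma> (I1 \<union> I2))"
  by (simp add: pair_equiv_def adj_preserving_def)

lemma runsE:
  assumes "R \<in> runs S"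
  obtains a b where "a \<le> b" "R = {a..b}" "R \<subseteq> S" "\<And>x. Suc x = a \<Longrightarrow> x \<notin> S" "Suc b \<notin> S"
  using assms unfolding runs_def by blast

lemma runsI:
  assumes "a \<le> b" "{a..b} \<subseteq> S" "\<And>x. Suc x = a \<Longrightarrow> x \<notin> S" "Suc b \<notin> S"
  shows "{a..b} \<in> runs S"
  using assms unfolding runs_def by blast

lemma runs_sub: "R \<in> runs S \<Longrightarrow> R \<subseteq> S"
  by (auto simp: runs_def)

lemma runs_finite: "finite S \<Longrightarrow> finite (runs S)"
  by (rule finite_subset[of _ "Pow S"]) (auto dest: runs_sub)

lemma run_eq_interval:
  assumes "R \<in> runs S"
  shows "Min R \<le> Max R" "R = {Min R..Max R}"
proof -
  obtain a b where "a \<le> b" "R = {a..b}"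
    using runsE[OF assms] by metis
  moreover have "Min {a..b} = a" "Max {a..b} = b"
    using \<open>a \<le> b\<close> by (auto intro: Min_eqI Max_eqI)
  ultimately show "Min R \<le> Max R" "R = {Min R..Max R}"
    by simp_all
qed

lemma run_start_exists:
  assumes "finite S" "x \<in> S"
  obtains a where "a \<le> x" "{a..x} \<subseteq> S" "\<And>y. Suc y = a \<Longrightarrow> y \<notin> S"
proof -
  define L where "L = {a. a \<le> x \<and> {a..x} \<subseteq> S}"
  have "L \<subseteq> {..x}" "x \<in> L"
    using assms(2) by (auto simp: L_def)
  then have fin: "finite L"
    using finite_subset by blast
  then have "Min L \<in> L"
    using Min_in \<open>x \<in> L\<close> by blast
  show thesis
  proof (rule that)
    show "Min L \<le> x" "{Min L..x} \<subseteq> S"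
      using \<open>Min L \<in> L\<close> by (simp_all add: L_def)
    show "y \<notin> S" if "Suc y = Min L" for y
    proof
      assume "y \<in> S"
      have "{y..x} = insert y {Min L..x}"
        using \<open>Min L \<in> L\<close> that by (auto simp: L_def)
      then have "y \<in> L"
        using \<open>Min L \<in> L\<close> \<open>y \<in> S\<close> that by (simp add: L_def)
      then show False
        using Min_le[OF fin] that by fastforce
    qed
  qed
qed

lemma run_end_exists:
  assumes "finite S" "x \<in> S"
  obtains b where "x \<le> b" "{x..b} \<subseteq> S" "Suc b \<notin> S"
proof -
  define B where "B = {b. x \<le> b \<and> {x..b} \<subseteq> S}"
  have "B \<subseteq> S" "x \<in> B"
    using assms(2) by (auto simp: B_def)
  then have fin: "finite B"
    using assms(1) finite_subset by blast
  then have "Max B \<in> B"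
    using Max_in \<open>x \<in> B\<close> by blast
  show thesis
  proof (rule that)
    show "x \<le> Max B" "{x..Max B} \<subseteq> S"
      using \<open>Max B \<in> B\<close> by (simp_all add: B_def)
    show "Suc (Max B) \<notin> S"
    proof
      assume "Suc (Max B) \<in> S"
      then have "Suc (Max B) \<in> B"
        using \<open>Max B \<in> B\<close> by (simp add: B_def atLeastAtMostSuc_conv)
      then show False
        using Max_ge[OF fin] by fastforce
    qed
  qed
qed

lemma runs_cover:
  assumes "finite S" "x \<in> S"
  obtains R where "R \<in> runs S" "x \<in> R"
proof -
  obtain a where a: "a \<le> x" "{a..x} \<subseteq> S" "\<And>y. Suc y = a \<Longrightarrow> y \<notin> S"
    using run_start_exists[OF assms] by blast
  obtain b where b: "x \<le> b" "{x..b} \<subseteq> S" "Suc b \<notin> S"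
    using run_end_exists[OF assms] by blast
  have "{a..b} \<in> runs S"
  proof (rule runsI)
    show "a \<le> b"
      using a(1) b(1) by simp
    have "{a..b} \<subseteq> {a..x} \<union> {x..b}"
      by auto
    then show "{a..b} \<subseteq> S"
      using a(2) b(2) by blast
  qed (use a(3) b(3) in auto)
  moreover have "x \<in> {a..b}"
    using a(1) b(1) by simp
  ultimately show thesis
    by (rule that)
qed

lemma Union_runs:
  assumes "finite S"
  shows "\<Union>(runs S) = S"
proof
  show "\<Union>(runs S) \<subseteq> S"
    using runs_sub by blast
  show "S \<subseteq> \<Union>(runs S)"
  proof
    fix x assume "x \<in> S"
    then obtain R where "R \<in> runs S" "x \<in> R"
      using runs_cover[OF assms] by blast
    then show "x \<in> \<Union>(runs S)"
      by blast
  qed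
qed

lemma run_adj_closed:
  assumes "R \<in> runs S"
  shows "adj_closed S R"
  unfolding adj_closed_def
proof (intro ballI impI)
  fix x y assume x: "x \<in> R" and y: "y \<in> S" and "\<bar>int x - int y\<bar> = 1"
  obtain a b where R: "R = {a..b}" and before: "\<And>z. Suc z = a \<Longrightarrow> z \<notin> S"
    and after: "Suc b \<notin> S"
    using runsE[OF assms] by metis
  from \<open>\<bar>int x - int y\<bar> = 1\<close> consider "y = Suc x" | "x = Suc y"
    by linarith
  then show "y \<in> R"
  proof cases
    case 1
    then have "x \<noteq> b"
      using y after by blast
    then show ?thesis
      using 1 x R by auto
  next
    case 2
    then have "x \<noteq> a"
      using y before by blast
    then show ?thesis
      using 2 x R by auto
  qed
qed

lemma adj_connectedD:
  assumes "adj_connected C" "d \<in> D" "D \<subseteq> C" "adj_closed C D"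
  shows "D = C"
  using assms unfolding adj_connected_def by blast

lemma adj_connected_interval: "adj_connected {a..b}"
  unfolding adj_connected_def
proof (intro allI impI)
  fix D assume "D \<noteq> {}" "D \<subseteq> {a..b}" "adj_closed {a..b} D"
  then obtain d where "d \<in> D"
    by blast
  have grow: "y \<in> D" if "x \<in> D" "y \<in> {a..b}" "\<bar>int x - int y\<bar> = 1" for x y
    using \<open>adj_closed {a..b} D\<close> that unfolding adj_closed_def by blast
  have "y \<in> D" if y: "y \<in> {a..b}" for y
  proof (cases "d \<le> y")
    case True
    then show ?thesis
    proof (induction rule: dec_induct)
      case (step n)
      have "Suc n \<in> {a..b}"
        using step(1,2) y \<open>d \<in> D\<close> \<open>D \<subseteq> {a..b}\<close> by auto
      with step(3) show ?case
        by (rule grow) simp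
    qed (fact \<open>d \<in> D\<close>)
  next
    case False
    then have "y \<le> d"
      by simp
    then show ?thesis
    proof (induction rule: inc_induct)
      case (step n)
      have "n \<in> {a..b}"
        using step(1,2) y \<open>d \<in> D\<close> \<open>D \<subseteq> {a..b}\<close> by auto
      with step(3) show ?case
        by (rule grow) simp
    qed (fact \<open>d \<in> D\<close>)
  qed
  with \<open>D \<subseteq> {a..b}\<close> show "D = {a..b}"
    by blast
qed

lemma adj_connected_imp_interval:
  assumes "finite C" "C \<noteq> {}" "adj_connected C"
  shows "C = {Min C..Max C}"
proof
  show "C \<subseteq> {Min C..Max C}"
    using assms(1) by (simp add: subset_iff)
  show "{Min C..Max C} \<subseteq> C"
  proof
    fix g assume g: "g \<in> {Min C..Max C}"
    show "g \<in> C"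
    proof (rule ccontr)
      assume "g \<notin> C"
      define D where "D = {c \<in> C. c < g}"
      have "Min C \<in> C" "Max C \<in> C"
        using assms(1,2) by simp_all
      have "D = C"
      proof (rule adj_connectedD[OF assms(3)])
        have "Min C \<noteq> g"
          using \<open>Min C \<in> C\<close> \<open>g \<notin> C\<close> by blast
        with g \<open>Min C \<in> C\<close> show "Min C \<in> D"
          by (simp add: D_def)
        show "D \<subseteq> C"
          by (simp add: D_def)
        show "adj_closed C D"
          unfolding adj_closed_def
        proof (intro ballI impI)
          fix i j assume "i \<in> D" "j \<in> C" "\<bar>int i - int j\<bar> = 1"
          moreover have "j \<noteq> g"
            using \<open>j \<in> C\<close> \<open>g \<notin> C\<close> by blast
          moreover have "i < g"
            using \<open>i \<in> D\<close> by (simp add: D_def)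
          ultimately have "j < g"
            by linarith
          with \<open>j \<in> C\<close> show "j \<in> D"
            by (simp add: D_def)
        qed
      qed
      with \<open>Max C \<in> C\<close> have "Max C \<in> D"
        by simp
      then have "Max C < g"
        by (simp add: D_def)
      with g show False
        by simp
    qed
  qed
qed

lemma adj_connected_image:
  assumes "adj_preserving \<sigma> C" "adj_connected C"
  shows "adj_connected (\<sigma> ` C)"
  unfolding adj_connected_def
proof (intro allI impI)
  fix D assume D: "D \<noteq> {}" "D \<subseteq> \<sigma> ` C" "adj_closed (\<sigma> ` C) D"
  define D' where "D' = {c \<in> C. \<sigma> c \<in> D}"
  obtain c where "c \<in> D'"
    using D(1,2) unfolding D'_def by blast
  have "D' = C"
  proof (rule adj_connectedD[OF assms(2) \<open>c \<in> D'\<close>])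
    show "D' \<subseteq> C"
      by (simp add: D'_def)
    show "adj_closed C D'"
      unfolding adj_closed_def
    proof (intro ballI impI)
      fix i j assume "i \<in> D'" "j \<in> C" "\<bar>int i - int j\<bar> = 1"
      then have "\<bar>int (\<sigma> i) - int (\<sigma> j)\<bar> = 1"
        using assms(1) unfolding adj_preserving_def D'_def by blast
      then have "\<sigma> j \<in> D"
        using D(3) \<open>i \<in> D'\<close> \<open>j \<in> C\<close> unfolding adj_closed_def D'_def by blast
      with \<open>j \<in> C\<close> show "j \<in> D'"
        by (simp add: D'_def)
    qed
  qed
  with D(2) show "D = \<sigma> ` C"
    by (auto simp: D'_def)
qed

lemma adj_closed_image:
  assumes "adj_preserving \<sigma> S" "C \<subseteq> S" "adj_closed S C"
  shows "adj_closed (\<sigma> ` S) (\<sigma> ` C)"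
  unfolding adj_closed_def
proof (intro ballI impI)
  fix i j assume "i \<in> \<sigma> ` C" "j \<in> \<sigma> ` S" "\<bar>int i - int j\<bar> = 1"
  then obtain c s where cs: "c \<in> C" "s \<in> S" "j = \<sigma> s" "\<bar>int (\<sigma> c) - int (\<sigma> s)\<bar> = 1"
    by blast
  then have "\<bar>int c - int s\<bar> = 1"
    using assms(1,2) unfolding adj_preserving_def by blast
  then have "s \<in> C"
    using assms(3) cs(1,2) unfolding adj_closed_def by blast
  with cs(3) show "j \<in> \<sigma> ` C"
    by blast
qed

lemma run_adj_component:
  assumes "R \<in> runs S"
  shows "adj_component S R"
proof -
  obtain a b where "a \<le> b" "R = {a..b}" "R \<subseteq> S"
    using runsE[OF assms] by metis
  then show ?thesis
    using run_adj_closed[OF assms] adj_connected_interval unfolding adj_component_def by auto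
qed

lemma adj_component_run:
  assumes "finite S" "adj_component S C"
  shows "C \<in> runs S"
proof -
  have C: "C \<noteq> {}" "C \<subseteq> S" "adj_closed S C" "adj_connected C"
    using assms(2) unfolding adj_component_def by blast+
  have fin: "finite C"
    using C(2) assms(1) finite_subset by blast
  have closed: "x \<in> C" if "c \<in> C" "x \<in> S" "\<bar>int c - int x\<bar> = 1" for c x
    using C(3) that unfolding adj_closed_def by blast
  have "{Min C..Max C} \<in> runs S"
  proof (rule runsI)
    show "Min C \<le> Max C"
      using fin C(1) by simp
    show "{Min C..Max C} \<subseteq> S"
      using adj_connected_imp_interval[OF fin C(1,4)] C(2) by simp
    show "x \<notin> S" if "Suc x = Min C" for x
    proof
      assume "x \<in> S"
      moreover have "\<bar>int (Min C) - int x\<bar> = 1"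
        by (simp add: that[symmetric])
      ultimately have "x \<in> C"
        using closed[of "Min C" x] fin C(1) by simp
      then show False
        using Min_le[OF fin] that by fastforce
    qed
    show "Suc (Max C) \<notin> S"
    proof
      assume "Suc (Max C) \<in> S"
      then have "Suc (Max C) \<in> C"
        using closed[of "Max C"] fin C(1) by simp
      then show False
        using Max_ge[OF fin] by fastforce
    qed
  qed
  then show ?thesis
    using adj_connected_imp_interval[OF fin C(1,4)] by simp
qed

lemma runs_eq_adj_components: "finite S \<Longrightarrow> R \<in> runs S \<longleftrightarrow> adj_component S R"
  using run_adj_component adj_component_run by blast

lemma runs_disjoint:
  assumes "R1 \<in> runs S" "R2 \<in> runs S" "x \<in> R1" "x \<in> R2"
  shows "R1 = R2"
proof -
  have meet: "R \<inter> R' = R" if "R \<in> runs S" "R' \<in> runs S" "x \<in> R" "x \<in> R'" for R R'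
  proof (rule adj_connectedD)
    show "adj_connected R"
      using run_adj_component[OF that(1)] unfolding adj_component_def by blast
    show "x \<in> R \<inter> R'" "R \<inter> R' \<subseteq> R"
      using that(3,4) by auto
    show "adj_closed R (R \<inter> R')"
      using run_adj_closed[OF that(2)] runs_sub[OF that(1)] unfolding adj_closed_def by blast
  qed
  show ?thesis
    using meet[OF assms] meet[OF assms(2,1,4,3)] by (simp add: Int_commute)
qed

lemma adj_component_image:
  assumes "adj_preserving \<sigma> S" "adj_component S C"
  shows "adj_component (\<sigma> ` S) (\<sigma> ` C)"
  using assms adj_closed_image adj_connected_image adj_preserving_subset
  unfolding adj_component_def by blast

lemma adj_preserving_the_inv_into:
  assumes "inj_on \<sigma> S" "adj_preserving \<sigma> S"
  shows "adj_preserving (the_inv_into S \<sigma>) (\<sigma> ` S)"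
  using assms unfolding adj_preserving_def by (auto simp: the_inv_into_f_f)

lemma runs_image:
  assumes "finite S" "inj_on \<sigma> S" "adj_preserving \<sigma> S"
  shows "runs (\<sigma> ` S) = (`) \<sigma> ` runs S"
proof
  show "(`) \<sigma> ` runs S \<subseteq> runs (\<sigma> ` S)"
    using assms(1,3) adj_component_image by (auto simp: runs_eq_adj_components)
  show "runs (\<sigma> ` S) \<subseteq> (`) \<sigma> ` runs S"
  proof
    fix R assume R: "R \<in> runs (\<sigma> ` S)"
    define \<tau> where "\<tau> = the_inv_into S \<sigma>"
    have "\<tau> ` R \<in> runs (\<tau> ` \<sigma> ` S)"
      using R assms adj_component_image[OF adj_preserving_the_inv_into]
      by (auto simp: runs_eq_adj_components \<tau>_def)
    moreover have "\<tau> ` \<sigma> ` S = S"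
      by (simp add: \<tau>_def the_inv_into_onto assms(2))
    moreover have "\<sigma> ` \<tau> ` R = R"
      using runs_sub[OF R] by (force simp: \<tau>_def image_image f_the_inv_into_f[OF assms(2)])
    ultimately show "R \<in> (`) \<sigma> ` runs S"
      by (metis image_eqI)
  qed
qed

lemma run_decomp_image:
  assumes "finite S" "inj_on \<sigma> S" "adj_preserving \<sigma> S"
  shows "run_decomp (\<sigma> ` S) = run_decomp S"
proof -
  have inj: "inj_on ((`) \<sigma>) (runs S)"
    using assms(2) by (intro inj_onI) (metis inj_on_image_eq_iff runs_sub)
  have "image_mset card (mset_set (runs (\<sigma> ` S))) = image_mset (card \<circ> (`) \<sigma>) (mset_set (runs S))"
    by (simp add: runs_image[OF assms] image_mset_mset_set[OF inj, symmetric] multiset.map_comp)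
  also have "\<dots> = image_mset card (mset_set (runs S))"
  proof (rule image_mset_cong)
    fix R assume "R \<in># mset_set (runs S)"
    then have "R \<subseteq> S"
      using runs_sub runs_finite[OF assms(1)] by simp
    then show "(card \<circ> (`) \<sigma>) R = card R"
      using assms(2) by (simp add: card_image inj_on_subset)
  qed
  finally show ?thesis
    unfolding run_decomp_def by simp
qed

lemma card_H2_insert:
  assumes "finite U"
  shows "card (H2 U A I1 (insert i I2)) = card (H2 U A I1 I2) - card (H2 U A (insert i I1) I2)"
proof -
  have "H2 U A I1 (insert i I2) = H2 U A I1 I2 - H2 U A (insert i I1) I2"
    "H2 U A (insert i I1) I2 \<subseteq> H2 U A I1 I2"
    unfolding H2_def by auto
  moreover have "finite (H2 U A I1 I2)"
    using assms unfolding H2_def by simp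
  ultimately show ?thesis
    by (simp add: card_Diff_subset finite_subset)
qed

lemma card_H2_image_eq:
  assumes "finite U" "finite I2"
    and "\<And>K. I1 \<subseteq> K \<Longrightarrow> K \<subseteq> I1 \<union> I2 \<Longrightarrow> card (H1 U A (\<sigma> ` K)) = card (H1 U A K)"
  shows "card (H2 U A (\<sigma> ` I1) (\<sigma> ` I2)) = card (H2 U A I1 I2)"
  using assms(2,3)
proof (induction I2 arbitrary: I1 rule: finite_induct)
  case empty
  then show ?case
    by (simp add: H1_def)
next
  case (insert i I2)
  have IH: "card (H2 U A (\<sigma> ` I1) (\<sigma> ` I2)) = card (H2 U A I1 I2)"
    by (rule insert.IH, rule insert.prems) auto
  have IH_insert: "card (H2 U A (\<sigma> ` insert i I1) (\<sigma> ` I2)) = card (H2 U A (insert i I1) I2)"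
    by (rule insert.IH, rule insert.prems) auto
  have "card (H2 U A (\<sigma> ` I1) (\<sigma> ` insert i I2))
      = card (H2 U A (\<sigma> ` I1) (\<sigma> ` I2)) - card (H2 U A (\<sigma> ` insert i I1) (\<sigma> ` I2))"
    using card_H2_insert[OF assms(1), of A "\<sigma> ` I1" "\<sigma> i" "\<sigma> ` I2"] by simp
  also have "\<dots> = card (H2 U A I1 I2) - card (H2 U A (insert i I1) I2)"
    by (simp only: IH IH_insert)
  also have "\<dots> = card (H2 U A I1 (insert i I2))"
    using card_H2_insert[OF assms(1)] by simp
  finally show ?case .
qed

lemma harmonic_card_H2_image:
  assumes "finite U" "harmonic U A m" "I1 \<union> I2 \<subseteq> {1..m}" "\<sigma> ` (I1 \<union> I2) \<subseteq> {1..m}"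
    "inj_on \<sigma> (I1 \<union> I2)" "adj_preserving \<sigma> (I1 \<union> I2)"
  shows "card (H2 U A (\<sigma> ` I1) (\<sigma> ` I2)) = card (H2 U A I1 I2)"
proof (rule card_H2_image_eq[OF assms(1)])
  show "finite I2"
    using assms(3) by (meson finite_atLeastAtMost finite_subset le_sup_iff)
  fix K assume "I1 \<subseteq> K" "K \<subseteq> I1 \<union> I2"
  then have "K \<subseteq> {1..m}" "\<sigma> ` K \<subseteq> {1..m}"
    using assms(3,4) by auto
  moreover have "run_decomp (\<sigma> ` K) = run_decomp K"
  proof (rule run_decomp_image)
    show "finite K"
      using \<open>K \<subseteq> {1..m}\<close> finite_subset by blast
    show "inj_on \<sigma> K"
      using assms(5) \<open>K \<subseteq> I1 \<union> I2\<close> by (rule inj_on_subset)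
    show "adj_preserving \<sigma> K"
      using assms(6) \<open>K \<subseteq> I1 \<union> I2\<close> by (rule adj_preserving_subset)
  qed
  ultimately show "card (H1 U A (\<sigma> ` K)) = card (H1 U A K)"
    using assms(2) unfolding harmonic_def by metis
qed

lemma bij_betw_shift_interval:
  fixes a b c d :: nat
  assumes "a \<le> b" "card {a..b} = card {c..d}"
  shows "bij_betw (\<lambda>x. x - a + c) {a..b} {c..d}"
proof -
  have "d - c = b - a" "c \<le> d"
    using assms by auto
  moreover have "y \<in> (\<lambda>x. x - a + c) ` {a..b}" if "y \<in> {c..d}" for y
    using that \<open>d - c = b - a\<close> assms(1) by (intro image_eqI[of _ _ "y - c + a"]) auto
  ultimately show ?thesis
    unfolding bij_betw_def inj_on_def by auto
qed

lemma image_mset_eq_imp_bij_betw: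
  assumes "finite X" "finite Y" "image_mset h (mset_set X) = image_mset h (mset_set Y)"
  shows "\<exists>g. bij_betw g X Y \<and> (\<forall>x\<in>X. h (g x) = h x)"
  using assms
proof (induction X arbitrary: Y rule: finite_induct)
  case empty
  then have "Y = {}"
    by (simp add: mset_set_empty_iff)
  then show ?case
    using bij_betw_id by blast
next
  case (insert x X)
  then have "h x \<in># image_mset h (mset_set Y)"
    by (metis image_mset_add_mset mset_set.insert union_single_eq_member)
  then obtain y where y: "y \<in> Y" "h y = h x"
    using insert.prems(1) by auto
  have "image_mset h (mset_set X) = image_mset h (mset_set (Y - {y}))"
    using insert y by (simp add: mset_set.remove)
  then obtain g where g: "bij_betw g X (Y - {y})" "\<forall>x\<in>X. h (g x) = h x"
    using insert.IH insert.prems(1) by blast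
  have "bij_betw (g(x := y)) X (Y - {y})"
    using g(1) insert.hyps(2) by (auto intro: bij_betw_cong[THEN iffD1, OF _ g(1)])
  then have "bij_betw (g(x := y)) (insert x X) Y"
    using notIn_Un_bij_betw3[of x X "g(x := y)" "Y - {y}"] insert.hyps(2) y(1)
    by (simp add: insert_absorb)
  moreover have "\<forall>z\<in>insert x X. h ((g(x := y)) z) = h z"
    using g(2) y(2) insert.hyps(2) by auto
  ultimately show ?case
    by blast
qed

lemma bij_betw_extend:
  assumes "finite X" "I \<subseteq> X" "J \<subseteq> X" "bij_betw f I J"
  obtains \<sigma> where "bij_betw \<sigma> X X" "\<And>x. x \<in> I \<Longrightarrow> \<sigma> x = f x"
proof -
  have "card (X - I) = card (X - J)"
    using bij_betw_same_card[OF assms(4)] assms(1-3) by (simp add: card_Diff_subset finite_subset)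
  then obtain h where h: "bij_betw h (X - I) (X - J)"
    using finite_same_card_bij assms(1) by blast
  define \<sigma> where "\<sigma> x = (if x \<in> I then f x else h x)" for x
  have "bij_betw \<sigma> (I \<union> (X - I)) (J \<union> (X - J))"
  proof (rule bij_betw_combine)
    show "bij_betw \<sigma> I J"
      using assms(4) by (rule bij_betw_cong[THEN iffD1, rotated]) (simp add: \<sigma>_def)
    show "bij_betw \<sigma> (X - I) (X - J)"
      using h by (rule bij_betw_cong[THEN iffD1, rotated]) (simp add: \<sigma>_def)
  qed blast
  then show thesis
    using that assms(2,3) by (simp add: \<sigma>_def Un_absorb1)
qed

lemma bij_betw_runs_glue:
  assumes "finite I" "finite J" "bij_betw g (runs I) (runs J)"
    and "\<And>R. R \<in> runs I \<Longrightarrow> bij_betw f R (g R)"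
  shows "bij_betw f I J"
proof -
  have "disjoint_family_on g (runs I)"
    unfolding disjoint_family_on_def
    using runs_disjoint bij_betwE[OF assms(3)] bij_betw_imp_inj_on[OF assms(3)]
    by (metis disjoint_iff inj_onD)
  then have "bij_betw f (\<Union>R\<in>runs I. R) (\<Union>R\<in>runs I. g R)"
    using assms(4) by (rule bij_betw_UNION_disjoint)
  then show ?thesis
    using Union_runs assms(1,2) bij_betw_imp_surj_on[OF assms(3)] by simp
qed

lemma adj_preserving_runs_glue:
  assumes "finite I" "bij_betw g (runs I) (runs J)"
    and maps_to: "\<And>R. R \<in> runs I \<Longrightarrow> f ` R \<subseteq> g R"
    and shift: "\<And>R x y. R \<in> runs I \<Longrightarrow> x \<in> R \<Longrightarrow> y \<in> R \<Longrightarrow> int (f x) - int (f y) = int x - int y"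
  shows "adj_preserving f I"
  unfolding adj_preserving_def
proof (intro ballI)
  fix x y assume "x \<in> I" "y \<in> I"
  then obtain R R' where R: "R \<in> runs I" "x \<in> R" and R': "R' \<in> runs I" "y \<in> R'"
    using runs_cover[OF assms(1)] by metis
  have gR: "g R \<in> runs J" "g R' \<in> runs J"
    using bij_betwE[OF assms(2)] R(1) R'(1) by blast+
  show "\<bar>int (f x) - int (f y)\<bar> = 1 \<longleftrightarrow> \<bar>int x - int y\<bar> = 1"
  proof (cases "R = R'")
    case True
    then show ?thesis
      using shift[OF R] R'(2) by simp
  next
    case False
    have "\<not> \<bar>int x - int y\<bar> = 1"
    proof
      assume "\<bar>int x - int y\<bar> = 1"
      then have "y \<in> R"
        using run_adj_closed[OF R(1)] R(2) \<open>y \<in> I\<close> unfolding adj_closed_def by blast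
      then show False
        using False runs_disjoint[OF R(1) R'(1) _ R'(2)] by blast
    qed
    moreover have "\<not> \<bar>int (f x) - int (f y)\<bar> = 1"
    proof
      assume "\<bar>int (f x) - int (f y)\<bar> = 1"
      moreover have "f x \<in> g R" "f y \<in> g R'"
        using maps_to R R' by blast+
      ultimately have "f y \<in> g R"
        using run_adj_closed[OF gR(1)] runs_sub[OF gR(2)] unfolding adj_closed_def by blast
      then have "g R = g R'"
        using runs_disjoint[OF gR] \<open>f y \<in> g R'\<close> by blast
      then show False
        using False bij_betw_imp_inj_on[OF assms(2)] R(1) R'(1) by (metis inj_onD)
    qed
    ultimately show ?thesis
      by simp
  qed
qed

lemma run_decomp_eq_imp_adj_preserving_bij:
  assumes "finite I" "finite J" "run_decomp I = run_decomp J"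
  obtains f where "bij_betw f I J" "adj_preserving f I"
proof -
  have "image_mset card (mset_set (runs I)) = image_mset card (mset_set (runs J))"
    using assms(3) unfolding run_decomp_def by (metis mset_sorted_list_of_multiset rev_rev_ident)
  then obtain g where g: "bij_betw g (runs I) (runs J)" "\<And>R. R \<in> runs I \<Longrightarrow> card (g R) = card R"
    using image_mset_eq_imp_bij_betw runs_finite assms(1,2) by metis
  have gR: "g R \<in> runs J" if "R \<in> runs I" for R
    using bij_betwE[OF g(1)] that by blast
  have "\<forall>x\<in>I. \<exists>R. R \<in> runs I \<and> x \<in> R"
    using runs_cover[OF assms(1)] by metis
  then obtain r where r: "\<And>x. x \<in> I \<Longrightarrow> r x \<in> runs I \<and> x \<in> r x"
    by metis
  define f where "f x = x - Min (r x) + Min (g (r x))" for x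
  have f_run: "f x = x - Min R + Min (g R)" if "R \<in> runs I" "x \<in> R" for R x
    using r runs_disjoint runs_sub that unfolding f_def by (metis subsetD)
  have f_bij: "bij_betw f R (g R)" if R: "R \<in> runs I" for R
  proof -
    have "bij_betw (\<lambda>x. x - Min R + Min (g R)) R (g R)"
      using bij_betw_shift_interval[of "Min R" "Max R" "Min (g R)" "Max (g R)"]
        run_eq_interval[OF R] run_eq_interval[OF gR[OF R]] g(2)[OF R]
      by simp
    then show ?thesis
      by (rule bij_betw_cong[THEN iffD1, rotated]) (simp add: f_run[OF R])
  qed
  show thesis
  proof (rule that)
    show "bij_betw f I J"
      using assms(1,2) g(1) f_bij by (rule bij_betw_runs_glue)
    show "adj_preserving f I"
    proof (rule adj_preserving_runs_glue[OF assms(1) g(1)])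
      show "f ` R \<subseteq> g R" if "R \<in> runs I" for R
        using f_bij[OF that] by (simp add: bij_betw_def)
      show "int (f x) - int (f y) = int x - int y" if "R \<in> runs I" "x \<in> R" "y \<in> R" for R x y
      proof -
        have "finite R"
          using runs_sub[OF that(1)] assms(1) finite_subset by blast
        then have "Min R \<le> x" "Min R \<le> y"
          using that(2,3) by simp_all
        then show ?thesis
          using f_run[OF that(1,2)] f_run[OF that(1,3)] by simp
      qed
    qed
  qed
qed

lemma run_decomp_eq_imp_pair_equiv:
  assumes "I \<subseteq> {1..m}" "J \<subseteq> {1..m}" "run_decomp I = run_decomp J"
  shows "pair_equiv m I {} J {}"
proof -
  obtain f where f: "bij_betw f I J" "adj_preserving f I"
    using run_decomp_eq_imp_adj_preserving_bij assms finite_subset by (metis finite_atLeastAtMost)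
  obtain \<sigma> where \<sigma>: "bij_betw \<sigma> {1..m} {1..m}" "\<And>x. x \<in> I \<Longrightarrow> \<sigma> x = f x"
    using bij_betw_extend[OF _ assms(1,2) f(1)] by blast
  have "\<sigma> ` I = J"
    using \<sigma>(2) bij_betw_imp_surj_on[OF f(1)] by simp
  moreover have "adj_preserving \<sigma> I"
    using f(2) \<sigma>(2) by (simp add: adj_preserving_def)
  ultimately show ?thesis
    using \<sigma>(1) unfolding pair_equiv_altdef by auto
qed

lemma pair_equiv_card_H2_eq:
  assumes "finite U" "harmonic U A m" "I1 \<subseteq> {1..m}" "I2 \<subseteq> {1..m}" "pair_equiv m I1 I2 J1 J2"
  shows "card (H2 U A I1 I2) = card (H2 U A J1 J2)"
proof -
  obtain \<sigma> where \<sigma>: "bij_betw \<sigma> {1..m} {1..m}" "\<sigma> ` I1 = J1" "\<sigma> ` I2 = J2"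
    "adj_preserving \<sigma> (I1 \<union> I2)"
    using assms(5) unfolding pair_equiv_altdef by blast
  have sub: "I1 \<union> I2 \<subseteq> {1..m}"
    using assms(3,4) by simp
  have "card (H2 U A (\<sigma> ` I1) (\<sigma> ` I2)) = card (H2 U A I1 I2)"
  proof (rule harmonic_card_H2_image[OF assms(1,2) sub _ _ \<sigma>(4)])
    show "\<sigma> ` (I1 \<union> I2) \<subseteq> {1..m}"
      using sub bij_betw_imp_surj_on[OF \<sigma>(1)] by blast
    show "inj_on \<sigma> (I1 \<union> I2)"
      using bij_betw_imp_inj_on[OF \<sigma>(1)] sub by (rule inj_on_subset)
  qed
  then show ?thesis
    using \<sigma>(2,3) by simp
qed

theorem lemma3p22:
  fixes U :: "'a set" and A :: "nat \<Rightarrow> 'a set" and m :: nat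
  assumes "finite U" and "\<forall>i\<in>{1..m}. A i \<subseteq> U"
  shows "harmonic U A m \<longleftrightarrow>
    (\<forall>I1 I2 J1 J2. I1 \<subseteq> {1..m} \<longrightarrow> I2 \<subseteq> {1..m} \<longrightarrow> J1 \<subseteq> {1..m} \<longrightarrow> J2 \<subseteq> {1..m} \<longrightarrow>
       I1 \<inter> I2 = {} \<longrightarrow> J1 \<inter> J2 = {} \<longrightarrow> pair_equiv m I1 I2 J1 J2 \<longrightarrow>
       card (H2 U A I1 I2) = card (H2 U A J1 J2))"
    (is "_ \<longleftrightarrow> ?equiv_invariant")
proof
  assume "harmonic U A m"
  then show ?equiv_invariant
    using pair_equiv_card_H2_eq[OF assms(1)] by blast
next
  assume equiv: ?equiv_invariant
  show "harmonic U A m"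
    unfolding harmonic_def H1_def
  proof (intro allI impI)
    fix I J
    assume "I \<subseteq> {1..m}" "J \<subseteq> {1..m}" "run_decomp I = run_decomp J"
    then have "pair_equiv m I {} J {}"
      by (rule run_decomp_eq_imp_pair_equiv)
    then show "card (H2 U A I {}) = card (H2 U A J {})"
      using equiv[rule_format, of I "{}" J "{}"] \<open>I \<subseteq> {1..m}\<close> \<open>J \<subseteq> {1..m}\<close> by simp
  qed
qed

end
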